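(* Let $\mathcal{F}$ be a regular family. Define $U_{\mathcal{F}}:\textbf{Tr}(2\times\mathbb{N})\to\textbf{Tr}(2\times\mathbb{N})$ by: $\varnothing\in U_{\mathcal{F}}(T)$, and for $k\geqslant1$, $(\varepsilon_i,n_i)_{i=1}^k\in U_{\mathcal{F}}(T)$ if and only if either $(\varepsilon_i,n_i)_{i=1}^k\in T$ or $\overline{(n_i)_{i=1}^k}\in\mathcal{F}$. Then $U_{\mathcal{F}}$ is continuous, and $U_{\mathcal{F}}(T)\in C$ if and only if $T\in C$.
   Context: A family $\mathcal{F}$ of finite subsets of $\mathbb{N}$ is regular if it is hereditary, spreading (if $(m_i)_{i=1}^k\in\mathcal{F}$ increasing and $n_1<\dots<n_k$, $m_i\leqslant n_i$, then $(n_i)_{i=1}^k\in\mathcal{F}$) and compact in $2^{\mathbb{N}}$; finite sets are identified with their increasing enumerations, so $\mathcal{F}$ is a tree on $\mathbb{N}$. For a set $\Lambda$, $\textbf{Tr}(\Lambda)$ is the set of subsets of $\Lambda^{<\mathbb{N}}$ (finite sequences) closed under initial segments, with the topology inherited from $2^{\Lambda^{<\mathbb{N}}}$ (product topology); $\textbf{Tr}=\textbf{Tr}(\mathbb{N})$; $2=\{0,1\}$. A tree $T$ on $\mathbb{N}$ is ill-founded if there is $(n_i)_{i=1}^\infty$ with $(n_i)_{i=1}^l\in T$ for all $l$, and well-founded otherwise; $\textbf{IF}$ denotes the ill-founded trees. For $T\in\textbf{Tr}(2\times\mathbb{N})$ and $\sigma=(\varepsilon_n)\in2^{\mathbb{N}}$,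 $T(\sigma)=\varnothing$ if $T=\varnothing$, and otherwise $T(\sigma)=\{\varnothing\}\cup\{(n_i)_{i=1}^l:(\varepsilon_i,n_i)_{i=1}^l\in T\}$. $C=\{T\in\textbf{Tr}(2\times\mathbb{N}):T(\sigma)\in\textbf{IF}\text{ for all }\sigma\in2^{\mathbb{N}}\}$. For $v=(n_1,\dots,n_k)$, $\overline{v}=(n_1,n_1+n_2,\dots,n_1+\dots+n_k)$. *)

theory Defs
  imports "HOL-Analysis.Analysis" "HOL-Library.Sublist"
begin

text \<open>The Cantor-cube topology on \<open>2^X\<close>: subsets of X identified with their
  characteristic functions \<open>X \<Rightarrow> 2\<close>, \<open>2 = {False, True}\<close> discrete, product topology.\<close>
definition cantor_top :: "'b set topology" where
  "cantor_top = pullback_topology UNIV (\<lambda>A x. x \<in> A)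
      (product_topology (\<lambda>_. discrete_topology (UNIV :: bool set)) UNIV)"

definition Tr :: "'a list set set" where
  "Tr = {T. \<forall>s\<in>T. \<forall>t. prefix t s \<longrightarrow> t \<in> T}"

definition IF :: "nat list set set" where
  "IF = {T \<in> Tr. \<exists>f :: nat \<Rightarrow> nat. \<forall>l. map f [0..<l] \<in> T}"

text \<open>\<open>T(\<sigma>)\<close> for \<open>T \<in> Tr(2\<times>\<nat>)\<close> and \<open>\<sigma> \<in> 2^\<nat>\<close> (\<open>\<sigma> i\<close> is the (i+1)-th entry).\<close>
definition tree_at :: "(bool \<times> nat) list set \<Rightarrow> (nat \<Rightarrow> bool) \<Rightarrow> nat list set" where
  "tree_at T \<sigma> = (if T = {} then {}
     else insert [] {ns. zip (map \<sigma> [0..<length ns]) ns \<in> T})"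

definition C_set :: "(bool \<times> nat) list set set" where
  "C_set = {T \<in> Tr. \<forall>\<sigma>. tree_at T \<sigma> \<in> IF}"

definition psums :: "nat list \<Rightarrow> nat list" where
  "psums v = map (\<lambda>k. sum_list (take (Suc k) v)) [0..<length v]"

text \<open>Finite sets identified with increasing enumerations.\<close>
definition seq_in :: "nat list \<Rightarrow> nat set set \<Rightarrow> bool" where
  "seq_in s F \<longleftrightarrow> sorted_wrt (<) s \<and> set s \<in> F"

definition regular :: "nat set set \<Rightarrow> bool" where
  "regular F \<longleftrightarrow> (\<forall>A\<in>F. finite A)
     \<and> (\<forall>A\<in>F. \<forall>B. B \<subseteq> A \<longrightarrow> B \<in> F)
     \<and> (\<forall>m n. seq_in m F \<and> sorted_wrt (<) n \<and> length n = length m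
          \<and> (\<forall>i<length m. m ! i \<le> n ! i) \<longrightarrow> seq_in n F)
     \<and> compactin cantor_top F"

definition U_F :: "nat set set \<Rightarrow> (bool \<times> nat) list set \<Rightarrow> (bool \<times> nat) list set" where
  "U_F F T = insert [] {s. s \<noteq> [] \<and> (s \<in> T \<or> seq_in (psums (map snd s)) F)}"

end

theory Submission
  imports Defs
begin

(* Whether s belongs to U_F F T depends only on whether s belongs to T, so U_F F is continuous
   coordinatewise. Since T \<subseteq> U_F F T, every branch of T is one of U_F F T. Conversely, if an
   infinite branch of U_F F T left T at some level, then, T being a tree, all its longer initial
   segments would lie outside T, so their partial sums would lie in F; the partial sums would then
   form an infinite set all of whose initial segments belong to F. A compact family F of finite
   sets has no such set: the open sets {A. x \<notin> A}, x in the infinite set, cover F, and a finite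
   subcover yields a finite subset contained in no member of F. *)

lemma continuous_map_cantor_member:
  "continuous_map cantor_top (discrete_topology UNIV) (\<lambda>A. x \<in> A)"
proof -
  have "continuous_map (product_topology (\<lambda>_. discrete_topology UNIV) UNIV)
      (discrete_topology (UNIV :: bool set)) (\<lambda>h. h x)"
    by (rule continuous_map_product_projection) simp
  then have "continuous_map cantor_top (discrete_topology UNIV) ((\<lambda>h. h x) \<circ> (\<lambda>A x. x \<in> A))"
    unfolding cantor_top_def by (rule continuous_map_pullback)
  then show ?thesis
    by (simp add: o_def)
qed

lemma continuous_map_into_cantor_top:
  "continuous_map X cantor_top f \<longleftrightarrow>
     (\<forall>x. continuous_map X (discrete_topology UNIV) (\<lambda>a. x \<in> f a))"
proof
  assume f: "continuous_map X cantor_top f"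
  show "\<forall>x. continuous_map X (discrete_topology UNIV) (\<lambda>a. x \<in> f a)"
  proof
    fix x
    show "continuous_map X (discrete_topology UNIV) (\<lambda>a. x \<in> f a)"
      using continuous_map_compose[OF f continuous_map_cantor_member] by (simp add: o_def)
  qed
next
  assume "\<forall>x. continuous_map X (discrete_topology UNIV) (\<lambda>a. x \<in> f a)"
  then have "continuous_map X (product_topology (\<lambda>_. discrete_topology UNIV) UNIV)
      ((\<lambda>A x. x \<in> A) \<circ> f)"
    unfolding continuous_map_componentwise_UNIV by (simp add: o_def)
  then show "continuous_map X cantor_top f"
    unfolding cantor_top_def by (rule continuous_map_pullback') simp
qed

lemma openin_cantor_not_member: "openin cantor_top {A. x \<notin> A}"
proof -
  have "openin cantor_top {A \<in> topspace cantor_top. (x \<in> A) \<in> {False}}"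
    by (rule openin_continuous_map_preimage[OF continuous_map_cantor_member]) simp
  then show ?thesis
    by (simp add: cantor_top_def topspace_pullback_topology)
qed

lemma compactin_cantor_finite_sets_miss_finite_subset:
  assumes compact: "compactin cantor_top F" and fin: "\<forall>A\<in>F. finite A" and "infinite B"
  obtains N where "N \<subseteq> B" "finite N" "\<forall>A\<in>F. \<not> N \<subseteq> A"
proof -
  let ?V = "\<lambda>x. {A. x \<notin> A}"
  have opn: "\<And>U. U \<in> ?V ` B \<Longrightarrow> openin cantor_top U"
    by (auto intro: openin_cantor_not_member)
  have cover: "F \<subseteq> \<Union>(?V ` B)"
  proof
    fix A assume "A \<in> F"
    then have "\<not> B \<subseteq> A"
      using fin \<open>infinite B\<close> finite_subset by blast
    then show "A \<in> \<Union>(?V ` B)" by blast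
  qed
  obtain G where G: "finite G" "G \<subseteq> ?V ` B" "F \<subseteq> \<Union>G"
    using compactinD[OF compact opn cover] by blast
  then obtain N where N: "N \<subseteq> B" "finite N" "G = ?V ` N"
    using finite_subset_image[OF G(1,2)] by blast
  have "\<forall>A\<in>F. \<not> N \<subseteq> A"
    using G(3) N(3) by blast
  with N(1,2) show ?thesis
    by (rule that)
qed

lemma regular_hereditary: "regular F \<Longrightarrow> A \<in> F \<Longrightarrow> B \<subseteq> A \<Longrightarrow> B \<in> F"
  unfolding regular_def by blast

lemma seq_in_take:
  assumes "regular F" "seq_in s F" shows "seq_in (take n s) F"
  using assms regular_hereditary[OF assms(1) _ set_take_subset]
  by (simp add: seq_in_def sorted_wrt_take)

lemma compactin_cantor_finite_sets_no_infinite_branch: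
  assumes compact: "compactin cantor_top F" and fin: "\<forall>A\<in>F. finite A"
  shows "\<exists>l. \<not> seq_in (map S [0..<l]) F"
proof (rule ccontr)
  assume "\<nexists>l. \<not> seq_in (map S [0..<l]) F"
  then have branch: "\<And>l. seq_in (map S [0..<l]) F" by blast
  have "S k < S (Suc k)" for k
    using branch[of "Suc (Suc k)"] by (simp add: seq_in_def sorted_wrt_append)
  then have "inj S"
    by (simp add: strict_mono_Suc_iff strict_mono_imp_inj_on)
  then have "infinite (range S)"
    by (rule range_inj_infinite)
  then obtain N where N: "N \<subseteq> range S" "finite N" "\<forall>A\<in>F. \<not> N \<subseteq> A"
    using compactin_cantor_finite_sets_miss_finite_subset[OF compact fin] by blast
  obtain M where M: "finite M" "N = S ` M"
    using finite_subset_image[OF N(2) N(1)] by blast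
  obtain l where "M \<subseteq> {..<l}"
    using finite_nat_bounded[OF M(1)] by blast
  then have "N \<subseteq> set (map S [0..<l])"
    using M(2) by auto
  moreover have "set (map S [0..<l]) \<in> F"
    using branch unfolding seq_in_def by blast
  ultimately show False
    using N(3) by blast
qed

lemma psums_take: "psums (take n xs) = take n (psums xs)"
  unfolding psums_def by (cases "n \<le> length xs") (auto simp: take_map min_def intro!: map_cong)

lemma psums_map_upt: "psums (map h [0..<l]) = map (\<lambda>k. \<Sum>i\<le>k. h i) [0..<l]"
  by (rule nth_equalityI)
    (simp_all add: psums_def take_map atMost_upto sum_list_map_eq_sum_count2
      flip: sum_set_upt_conv_sum_list_nat)

lemma Tr_prefix_closed: "T \<in> Tr \<Longrightarrow> s \<in> T \<Longrightarrow> prefix t s \<Longrightarrow> t \<in> T"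
  unfolding Tr_def by blast

lemma Tr_Nil_iff: "T \<in> Tr \<Longrightarrow> [] \<in> T \<longleftrightarrow> T \<noteq> {}"
  using Tr_prefix_closed[OF _ _ Nil_prefix] by blast

lemma zip_map_upt: "zip (map \<sigma> [0..<l]) (map f [0..<l]) = map (\<lambda>i. (\<sigma> i, f i)) [0..<l]"
  by (simp add: zip_map_map zip_same_conv_map)

lemma mem_tree_at_iff:
  "T \<noteq> {} \<Longrightarrow> ns \<in> tree_at T \<sigma> \<longleftrightarrow> ns = [] \<or> zip (map \<sigma> [0..<length ns]) ns \<in> T"
  by (simp add: tree_at_def)

lemma tree_at_Tr:
  assumes "T \<in> Tr" shows "tree_at T \<sigma> \<in> Tr"
proof (cases "T = {}")
  case True
  then show ?thesis by (simp add: tree_at_def Tr_def)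
next
  case False
  have "t \<in> tree_at T \<sigma>" if s: "s \<in> tree_at T \<sigma>" and "prefix t s" for s t
  proof -
    obtain r where "s = t @ r"
      using \<open>prefix t s\<close> by (auto simp: prefix_def)
    then have "zip (map \<sigma> [0..<length t]) t = take (length t) (zip (map \<sigma> [0..<length s]) s)"
      by (simp add: take_zip take_map)
    then have "prefix (zip (map \<sigma> [0..<length t]) t) (zip (map \<sigma> [0..<length s]) s)"
      by (metis take_is_prefix)
    then show ?thesis
      using s \<open>prefix t s\<close> Tr_prefix_closed[OF assms] mem_tree_at_iff[OF False] by auto
  qed
  then show ?thesis
    unfolding Tr_def by blast
qed

lemma branch_in_tree_at_iff:
  assumes "T \<in> Tr" "T \<noteq> {}"
  shows "map f [0..<l] \<in> tree_at T \<sigma> \<longleftrightarrow> map (\<lambda>i. (\<sigma> i, f i)) [0..<l] \<in> T"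
  using Tr_Nil_iff[OF assms(1)] assms(2) by (auto simp: mem_tree_at_iff zip_map_upt)

lemma tree_at_in_IF_iff:
  assumes "T \<in> Tr"
  shows "tree_at T \<sigma> \<in> IF \<longleftrightarrow> (\<exists>f. \<forall>l. map (\<lambda>i. (\<sigma> i, f i)) [0..<l] \<in> T)"
proof (cases "T = {}")
  case True
  then show ?thesis by (simp add: IF_def tree_at_def)
next
  case False
  have "tree_at T \<sigma> \<in> IF \<longleftrightarrow> (\<exists>f. \<forall>l. map f [0..<l] \<in> tree_at T \<sigma>)"
    using tree_at_Tr[OF assms] by (simp add: IF_def)
  also have "\<dots> \<longleftrightarrow> (\<exists>f. \<forall>l. map (\<lambda>i. (\<sigma> i, f i)) [0..<l] \<in> T)"
    using branch_in_tree_at_iff[OF assms False] by simp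
  finally show ?thesis .
qed

lemma C_set_iff:
  "T \<in> C_set \<longleftrightarrow> T \<in> Tr \<and> (\<forall>\<sigma>. \<exists>f. \<forall>l. map (\<lambda>i. (\<sigma> i, f i)) [0..<l] \<in> T)"
  unfolding C_set_def using tree_at_in_IF_iff by blast

lemma C_set_upward_closed: "T \<in> C_set \<Longrightarrow> T \<subseteq> T' \<Longrightarrow> T' \<in> Tr \<Longrightarrow> T' \<in> C_set"
  unfolding C_set_iff by blast

lemma subset_U_F: "T \<subseteq> U_F F T"
  by (auto simp: U_F_def)

lemma U_F_Tr:
  assumes "regular F" "T \<in> Tr" shows "U_F F T \<in> Tr"
  unfolding Tr_def mem_Collect_eq
proof (intro ballI allI impI)
  fix s t assume s: "s \<in> U_F F T" and "prefix t s"
  then have t: "t = take (length t) s"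
    by (metis append_eq_conv_conj prefix_def)
  have "seq_in (psums (map snd t)) F" if "seq_in (psums (map snd s)) F"
    using seq_in_take[OF assms(1) that, of "length t"] t by (metis psums_take take_map)
  then show "t \<in> U_F F T"
    using s \<open>prefix t s\<close> assms(2) Tr_prefix_closed by (auto simp: U_F_def)
qed

lemma branch_of_U_F_in_tree:
  assumes reg: "regular F" and T: "T \<in> Tr" and branch: "\<forall>l. map g [0..<l] \<in> U_F F T"
  shows "map g [0..<l] \<in> T"
proof (rule ccontr)
  let ?S = "\<lambda>k. \<Sum>i\<le>k. snd (g i)"
  assume short: "map g [0..<l] \<notin> T"
  have "prefix (map g [0..<l]) (map g [0..<l'])" if "l \<le> l'" for l'
    using take_is_prefix[of l "map g [0..<l']"] that by (simp add: take_map)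
  then have "map g [0..<l'] \<notin> T" if "l \<le> l'" for l'
    using Tr_prefix_closed[OF T] short that by blast
  then have long: "seq_in (map ?S [0..<l']) F" if "l < l'" for l'
    using branch[rule_format, of l'] that by (auto simp: U_F_def psums_map_upt)
  have "seq_in (map ?S [0..<l']) F" for l'
  proof -
    have "seq_in (take l' (map ?S [0..<l' + Suc l])) F"
      by (rule seq_in_take[OF reg long]) simp
    then show ?thesis by (simp add: take_map)
  qed
  moreover have "compactin cantor_top F" "\<forall>A\<in>F. finite A"
    using reg unfolding regular_def by simp_all
  ultimately show False
    using compactin_cantor_finite_sets_no_infinite_branch by blast
qed

lemma U_F_in_C_set_iff:
  assumes "regular F" "T \<in> Tr" shows "U_F F T \<in> C_set \<longleftrightarrow> T \<in> C_set"
proof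
  assume "U_F F T \<in> C_set"
  then show "T \<in> C_set"
    using branch_of_U_F_in_tree[OF assms] assms(2) unfolding C_set_iff by blast
next
  assume "T \<in> C_set"
  then show "U_F F T \<in> C_set"
    by (rule C_set_upward_closed[OF _ subset_U_F U_F_Tr[OF assms]])
qed

lemma continuous_map_U_F: "continuous_map cantor_top cantor_top (U_F F)"
  unfolding continuous_map_into_cantor_top
proof
  fix s :: "(bool \<times> nat) list"
  have "(\<lambda>T. s \<in> U_F F T) = (\<lambda>b. s = [] \<or> b \<or> seq_in (psums (map snd s)) F) \<circ> (\<lambda>T. s \<in> T)"
    by (auto simp: U_F_def)
  then show "continuous_map cantor_top (discrete_topology UNIV) (\<lambda>T. s \<in> U_F F T)"
    using continuous_map_compose[OF continuous_map_cantor_member, of "discrete_topology UNIV"]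
    by simp
qed

theorem proposition4p7:
  assumes "regular F"
  shows "continuous_map (subtopology cantor_top Tr) (subtopology cantor_top Tr) (U_F F)
         \<and> (\<forall>T \<in> Tr. U_F F T \<in> C_set \<longleftrightarrow> T \<in> C_set)"
  using continuous_map_from_subtopology[OF continuous_map_U_F] U_F_Tr[OF assms]
    U_F_in_C_set_iff[OF assms]
  by (auto simp: continuous_map_in_subtopology)

end
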